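(* Let $(\mathfrak A,|\cdot|)$ and $(\mathfrak B,\|\cdot\|)$ be Banach algebras such that $\mathfrak B$ is an envelope of $\mathfrak A$ (see context), with inclusion $\iota\colon\mathfrak A\to\mathfrak B$, and let $X$ be a Banach $\mathfrak B$-bimodule. Then $X$ is a Banach $\mathfrak A$-bimodule by restriction of the actions, and $\Delta(X)$ (the module of double centralizers from $\mathfrak A$ into $X$) is a Banach $\mathfrak B$-bimodule under the actions $$b.(L,R)=(L',R'),\ L'(a)=b.L(a),\ R'(a)=R(ab);\qquad (L,R).b=(L'',R''),\ L''(a)=L(ba),\ R''(a)=R(a).b,$$ for $b\in\mathfrak B$, $(L,R)\in\Delta(X)$, $a\in\mathfrak A$. For each bounded derivation $D\colon\mathfrak A\to X$ there is a bounded derivation $\widetilde D\colon\mathfrak B\to\Delta(X)$ with $\widetilde D\circ\iota=\iota_X\circ D$, where $\iota_X(x)=(L_x,R_x)$, $L_x(a)=x.a$, $R_x(a)=a.x$. Furthermore: (i) each $(S,T)\in\Delta(X)$ determines a derivation $\mathfrak A\to X$, $a\mapsto S(a)-T(a)$; (ii) if $\overline{\mathfrak A^2}=\mathfrak A$, then $\widetilde D$ is uniquely determined by $D$ (i.e. it is the only derivation $\mathfrak B\to\Delta(X)$ with $\widetilde D\circ\iota=\iota_X\circ D$), and if $\widetilde D$ is inner, then there is $(S,T)\in\Delta(X)$ such that $D(a)=S(a)-T(a)$ for all $a\in\mathfrak A$.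
   Context: For a Banach algebra $\mathfrak A$ and Banach $\mathfrak A$-bimodule $X$: $\mathbf h_{\mathfrak A}(\mathfrak A,X)$ denotes the space of bounded right module maps $S\colon\mathfrak A\to X$ ($S(ab)=S(a).b$), and ${}_{\mathfrak A}\mathbf h(\mathfrak A,X)$ the space of bounded left module maps $T\colon\mathfrak A\to X$ ($T(ab)=a.T(b)$). A double centralizer from $\mathfrak A$ into $X$ is a pair $(S,T)\in \mathbf h_{\mathfrak A}(\mathfrak A,X)\times {}_{\mathfrak A}\mathbf h(\mathfrak A,X)$ with $a.S(\alpha)=T(a).\alpha$ for all $a,\alpha\in\mathfrak A$; the set of these, normed by $\|(S,T)\|=\max\{\|S\|,\|T\|\}$ (operator norms), is denoted $\Delta(X)$. A derivation $D\colon\mathfrak A\to X$ is a bounded linear map with $D(ab)=a.D(b)+D(a).b$; it is inner if $D(a)=a.x-x.a$ for some $x\in X$. $\mathfrak B$ is an envelope of $\mathfrak A$ if $\mathfrak A$ is a (two-sided) ideal of $\mathfrak B$ with bounded inclusion $\iota\colon\mathfrak A\to\mathfrak B$, and there is $C>0$ with $\max\{|ba|,|ab|\}\le C|a|\|b\|$ for $a\in\mathfrak A$, $b\in\mathfrak B$. *)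

theory Defs
  imports "HOL-Analysis.Analysis"
begin

text \<open>Banach bimodule over a (real) normed algebra, relative to a subspace M of
  the module space (M = UNIV for an ordinary bimodule).\<close>
definition bimodule_on ::
  "'x::real_normed_vector set \<Rightarrow> ('b::real_normed_algebra \<Rightarrow> 'x \<Rightarrow> 'x) \<Rightarrow> ('x \<Rightarrow> 'b \<Rightarrow> 'x) \<Rightarrow> bool" where
  "bimodule_on M l r \<longleftrightarrow>
     subspace M \<and>
     (\<forall>b. \<forall>m\<in>M. l b m \<in> M \<and> r m b \<in> M) \<and>
     (\<forall>b1 b2. \<forall>m\<in>M. l (b1 + b2) m = l b1 m + l b2 m \<and> r m (b1 + b2) = r m b1 + r m b2) \<and>
     (\<forall>c b. \<forall>m\<in>M. l (c *\<^sub>R b) m = c *\<^sub>R l b m \<and> r m (c *\<^sub>R b) = c *\<^sub>R r m b) \<and>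
     (\<forall>b. \<forall>m1\<in>M. \<forall>m2\<in>M. l b (m1 + m2) = l b m1 + l b m2 \<and> r (m1 + m2) b = r m1 b + r m2 b) \<and>
     (\<forall>c b. \<forall>m\<in>M. l b (c *\<^sub>R m) = c *\<^sub>R l b m \<and> r (c *\<^sub>R m) b = c *\<^sub>R r m b) \<and>
     (\<exists>K. \<forall>b. \<forall>m\<in>M. norm (l b m) \<le> K * norm b * norm m \<and> norm (r m b) \<le> K * norm b * norm m) \<and>
     (\<forall>b1 b2. \<forall>m\<in>M. l (b1 * b2) m = l b1 (l b2 m)) \<and>
     (\<forall>b1 b2. \<forall>m\<in>M. r m (b1 * b2) = r (r m b1) b2) \<and>
     (\<forall>b1 b2. \<forall>m\<in>M. r (l b1 m) b2 = l b1 (r m b2))"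

definition banach_bimodule ::
  "('b::real_normed_algebra \<Rightarrow> 'x::banach \<Rightarrow> 'x) \<Rightarrow> ('x \<Rightarrow> 'b \<Rightarrow> 'x) \<Rightarrow> bool" where
  "banach_bimodule l r \<longleftrightarrow> bimodule_on UNIV l r"

text \<open>B is an envelope of A via the inclusion iota: iota is a bounded injective
  algebra homomorphism whose image is a two-sided ideal of B, with the norm estimate.\<close>
definition envelope :: "('a::real_normed_algebra \<Rightarrow> 'b::real_normed_algebra) \<Rightarrow> bool" where
  "envelope \<iota> \<longleftrightarrow> bounded_linear \<iota> \<and> inj \<iota> \<and> (\<forall>a a'. \<iota> (a * a') = \<iota> a * \<iota> a') \<and>
     (\<exists>C>0. \<forall>a b. \<exists>a1 a2. \<iota> a1 = b * \<iota> a \<and> \<iota> a2 = \<iota> a * b \<and>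
                       max (norm a1) (norm a2) \<le> C * norm a * norm b)"

definition amul_l :: "('a \<Rightarrow> 'b::times) \<Rightarrow> 'b \<Rightarrow> 'a \<Rightarrow> 'a" where
  "amul_l \<iota> b a = (THE a'. \<iota> a' = b * \<iota> a)"

definition amul_r :: "('a \<Rightarrow> 'b::times) \<Rightarrow> 'a \<Rightarrow> 'b \<Rightarrow> 'a" where
  "amul_r \<iota> a b = (THE a'. \<iota> a' = \<iota> a * b)"

definition derivation ::
  "('b::real_normed_algebra \<Rightarrow> 'x \<Rightarrow> 'x) \<Rightarrow> ('x \<Rightarrow> 'b \<Rightarrow> 'x::real_normed_vector) \<Rightarrow> ('b \<Rightarrow> 'x) \<Rightarrow> bool" where
  "derivation l r D \<longleftrightarrow> bounded_linear D \<and> (\<forall>a b. D (a * b) = l a (D b) + r (D a) b)"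

text \<open>Double centralizers from A into X (X a B-bimodule, A acting by restriction
  along iota).  First component S = right module map, second T = left module map.\<close>
definition DC ::
  "('a::real_normed_algebra \<Rightarrow> 'b::real_normed_algebra) \<Rightarrow> ('b \<Rightarrow> 'x::real_normed_vector \<Rightarrow> 'x) \<Rightarrow> ('x \<Rightarrow> 'b \<Rightarrow> 'x)
     \<Rightarrow> (('a \<Rightarrow>\<^sub>L 'x) \<times> ('a \<Rightarrow>\<^sub>L 'x)) set" where
  "DC \<iota> l r = {(S, T).
      (\<forall>a a'. blinfun_apply S (a * a') = r (blinfun_apply S a) (\<iota> a')) \<and>
      (\<forall>a a'. blinfun_apply T (a * a') = l (\<iota> a) (blinfun_apply T a')) \<and>
      (\<forall>a \<alpha>. l (\<iota> a) (blinfun_apply S \<alpha>) = r (blinfun_apply T a) (\<iota> \<alpha>))}"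

definition dc_lact ::
  "('a::real_normed_algebra \<Rightarrow> 'b::real_normed_algebra) \<Rightarrow> ('b \<Rightarrow> 'x::real_normed_vector \<Rightarrow> 'x)
     \<Rightarrow> 'b \<Rightarrow> ('a \<Rightarrow>\<^sub>L 'x) \<times> ('a \<Rightarrow>\<^sub>L 'x) \<Rightarrow> ('a \<Rightarrow>\<^sub>L 'x) \<times> ('a \<Rightarrow>\<^sub>L 'x)" where
  "dc_lact \<iota> l b LR = (Blinfun (\<lambda>a. l b (blinfun_apply (fst LR) a)),
                       Blinfun (\<lambda>a. blinfun_apply (snd LR) (amul_r \<iota> a b)))"

definition dc_ract ::
  "('a::real_normed_algebra \<Rightarrow> 'b::real_normed_algebra) \<Rightarrow> ('x::real_normed_vector \<Rightarrow> 'b \<Rightarrow> 'x)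
     \<Rightarrow> ('a \<Rightarrow>\<^sub>L 'x) \<times> ('a \<Rightarrow>\<^sub>L 'x) \<Rightarrow> 'b \<Rightarrow> ('a \<Rightarrow>\<^sub>L 'x) \<times> ('a \<Rightarrow>\<^sub>L 'x)" where
  "dc_ract \<iota> r LR b = (Blinfun (\<lambda>a. blinfun_apply (fst LR) (amul_l \<iota> b a)),
                       Blinfun (\<lambda>a. r (blinfun_apply (snd LR) a) b))"

definition iota_X ::
  "('a::real_normed_algebra \<Rightarrow> 'b::real_normed_algebra) \<Rightarrow> ('b \<Rightarrow> 'x::real_normed_vector \<Rightarrow> 'x) \<Rightarrow> ('x \<Rightarrow> 'b \<Rightarrow> 'x)
     \<Rightarrow> 'x \<Rightarrow> ('a \<Rightarrow>\<^sub>L 'x) \<times> ('a \<Rightarrow>\<^sub>L 'x)" where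
  "iota_X \<iota> l r x = (Blinfun (\<lambda>a. r x (\<iota> a)), Blinfun (\<lambda>a. l (\<iota> a) x))"

end

theory Submission
  imports Defs
begin

text \<open>Since \<open>\<AA>\<close> is an ideal of \<open>\<BB>\<close>, the Leibniz rule can be solved for the missing value
  \<open>D(b)\<close>: the pair \<open>(a \<mapsto> D(ba) - b.D(a), a \<mapsto> D(ab) - D(a).b)\<close>, which is what
  \<open>(a \<mapsto> D(b).a, a \<mapsto> a.D(b))\<close> would have to be, is a double centralizer, and \<open>D_ext\<close>, sending
  \<open>b\<close> to this pair, is a derivation extending \<open>D\<close>. The envelope estimate makes
  \<open>(b, a) \<mapsto> ba\<close> and \<open>(a, b) \<mapsto> ab\<close> bounded bilinear, so all maps involved are bounded and
  every algebraic identity reduces to the Leibniz rule and the module laws.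
  If \<open>\<AA>\<^sup>2\<close> is dense, a bounded linear map on \<open>\<AA>\<close> is determined by its values on products,
  so a double centralizer is determined by its products with \<open>\<AA>\<close>; this gives uniqueness of the
  extension and, when the extension is inner, implemented by \<open>(S, T)\<close>, shows that
  \<open>D + S - T\<close> vanishes.\<close>

lemma bounded_bilinear_Pair:
  assumes "bounded_bilinear f" and "bounded_bilinear g"
  shows "bounded_bilinear (\<lambda>x y. (f x y, g x y))"
proof -
  interpret f: bounded_bilinear f by fact
  interpret g: bounded_bilinear g by fact
  obtain Kf Kg where Kf: "\<And>x y. norm (f x y) \<le> norm x * norm y * Kf"
    and Kg: "\<And>x y. norm (g x y) \<le> norm x * norm y * Kg"
    using f.bounded g.bounded by metis
  have "norm (f x y, g x y) \<le> norm x * norm y * (Kf + Kg)" for x y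
  proof -
    have "norm (f x y, g x y) \<le> norm (f x y) + norm (g x y)" by (rule norm_Pair_le)
    also have "\<dots> \<le> norm x * norm y * Kf + norm x * norm y * Kg" by (intro add_mono Kf Kg)
    finally show ?thesis by (simp add: distrib_left)
  qed
  then show ?thesis
    by unfold_locales (auto simp: f.add_left f.add_right g.add_left g.add_right
        f.scaleR_left f.scaleR_right g.scaleR_left g.scaleR_right)
qed

lemma bounded_linear_eq_if_eq_on_products:
  fixes f g :: "'a::real_normed_algebra \<Rightarrow> 'x::real_normed_vector"
  assumes f: "bounded_linear f" and g: "bounded_linear g"
    and dense: "closure (span {a * a' | a a' :: 'a. True}) = UNIV"
    and eq: "\<And>a a'. f (a * a') = g (a * a')"
  shows "f = g"
proof -
  interpret f: bounded_linear f by fact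
  interpret g: bounded_linear g by fact
  let ?E = "{x. f x = g x}"
  have "subspace ?E"
    unfolding subspace_def by (auto simp: f.add g.add f.scaleR g.scaleR f.zero g.zero)
  moreover have "{a * a' | a a'. True} \<subseteq> ?E" using eq by auto
  ultimately have "span {a * a' | a a'. True} \<subseteq> ?E" by (rule span_minimal[rotated])
  moreover have "closed ?E"
    by (intro closed_Collect_eq linear_continuous_on f g)
  ultimately have "closure (span {a * a' | a a'. True}) \<subseteq> ?E"
    by (rule closure_minimal)
  then show ?thesis using dense by (auto intro!: ext)
qed

lemma bimodule_onI:
  fixes l :: "'b::real_normed_algebra \<Rightarrow> 'x::real_normed_vector \<Rightarrow> 'x" and r :: "'x \<Rightarrow> 'b \<Rightarrow> 'x"
  assumes "subspace M" and "\<And>b m. m \<in> M \<Longrightarrow> l b m \<in> M" and "\<And>b m. m \<in> M \<Longrightarrow> r m b \<in> M"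
    and "bounded_bilinear l" and "bounded_bilinear r"
    and "\<And>b1 b2 m. m \<in> M \<Longrightarrow> l (b1 * b2) m = l b1 (l b2 m)"
    and "\<And>b1 b2 m. m \<in> M \<Longrightarrow> r m (b1 * b2) = r (r m b1) b2"
    and "\<And>b1 b2 m. m \<in> M \<Longrightarrow> r (l b1 m) b2 = l b1 (r m b2)"
  shows "bimodule_on M l r"
proof -
  interpret L: bounded_bilinear l by fact
  interpret R: bounded_bilinear r by fact
  obtain KL KR where KL: "KL \<ge> 0" "\<And>b m. norm (l b m) \<le> norm b * norm m * KL"
    and KR: "KR \<ge> 0" "\<And>m b. norm (r m b) \<le> norm m * norm b * KR"
    using L.nonneg_bounded R.nonneg_bounded by metis
  have "norm (l b m) \<le> (KL + KR) * norm b * norm m \<and> norm (r m b) \<le> (KL + KR) * norm b * norm m"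
    for b m
  proof -
    have "norm b * norm m * KL \<le> norm b * norm m * (KL + KR)" "norm b * norm m * KR \<le> norm b * norm m * (KL + KR)"
      using KL(1) KR(1) by (simp_all add: mult_left_mono)
    then show ?thesis using KL(2)[of b m] KR(2)[of m b] by (simp add: ac_simps)
  qed
  then show ?thesis
    unfolding bimodule_on_def using assms
    by (auto simp: L.add_left L.add_right R.add_left R.add_right
        L.scaleR_left L.scaleR_right R.scaleR_left R.scaleR_right)
qed

lemma
  assumes "banach_bimodule l r"
  shows banach_bimodule_bounded_bilinear_left: "bounded_bilinear l"
    and banach_bimodule_bounded_bilinear_right: "bounded_bilinear r"
    and banach_bimodule_left_mult: "l (b1 * b2) m = l b1 (l b2 m)"
    and banach_bimodule_right_mult: "r m (b1 * b2) = r (r m b1) b2"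
    and banach_bimodule_left_right: "r (l b1 m) b2 = l b1 (r m b2)"
proof -
  note X = assms[unfolded banach_bimodule_def bimodule_on_def]
  obtain K where K: "\<And>b m. norm (l b m) \<le> K * norm b * norm m \<and> norm (r m b) \<le> K * norm b * norm m"
    using X by (metis UNIV_I)
  show "bounded_bilinear l"
    by unfold_locales (use X K in \<open>auto intro!: exI[of _ K] simp: ac_simps\<close>)
  show "bounded_bilinear r"
    by unfold_locales (use X K in \<open>auto intro!: exI[of _ K] simp: ac_simps\<close>)
qed (use assms in \<open>simp_all add: banach_bimodule_def bimodule_on_def\<close>)

lemma banach_bimodule_restrict:
  assumes X: "banach_bimodule l r" and h: "bounded_linear h"
    and h_mult: "\<And>a a'. h (a * a') = h a * h a'"
  shows "banach_bimodule (\<lambda>a x. l (h a) x) (\<lambda>x a. r x (h a))"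
  unfolding banach_bimodule_def
proof (rule bimodule_onI)
  show "bounded_bilinear (\<lambda>a. l (h a))"
    by (rule bounded_bilinear.comp1[OF banach_bimodule_bounded_bilinear_left[OF X] h])
  show "bounded_bilinear (\<lambda>x a. r x (h a))"
    by (rule bounded_bilinear.comp[OF banach_bimodule_bounded_bilinear_right[OF X] bounded_linear_ident h])
qed (simp_all add: h_mult banach_bimodule_left_mult[OF X] banach_bimodule_right_mult[OF X]
    banach_bimodule_left_right[OF X])

locale envelope_bimodule =
  fixes \<iota> :: "'a::real_normed_algebra \<Rightarrow> 'b::real_normed_algebra"
    and l :: "'b \<Rightarrow> 'x::banach \<Rightarrow> 'x" and r :: "'x \<Rightarrow> 'b \<Rightarrow> 'x"
  assumes envelope: "envelope \<iota>"
    and bimodule: "banach_bimodule l r"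
begin

sublocale I: bounded_linear \<iota>
  using envelope by (simp add: envelope_def)

sublocale L: bounded_bilinear l
  by (rule banach_bimodule_bounded_bilinear_left[OF bimodule])

sublocale R: bounded_bilinear r
  by (rule banach_bimodule_bounded_bilinear_right[OF bimodule])

lemmas l_mult = banach_bimodule_left_mult[OF bimodule]
lemmas r_mult = banach_bimodule_right_mult[OF bimodule]
lemmas r_l_comm = banach_bimodule_left_right[OF bimodule]

lemma iota_mult: "\<iota> (a * a') = \<iota> a * \<iota> a'"
  using envelope by (simp add: envelope_def)

lemma iota_inj: "\<iota> a = \<iota> a' \<Longrightarrow> a = a'"
  using envelope by (simp add: envelope_def inj_def)

lemma iota_amul_l [simp]: "\<iota> (amul_l \<iota> b a) = b * \<iota> a"
  and iota_amul_r [simp]: "\<iota> (amul_r \<iota> a b) = \<iota> a * b"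
proof -
  have "\<exists>!a'. \<iota> a' = b * \<iota> a" "\<exists>!a'. \<iota> a' = \<iota> a * b"
    using envelope iota_inj unfolding envelope_def by metis+
  then show "\<iota> (amul_l \<iota> b a) = b * \<iota> a" "\<iota> (amul_r \<iota> a b) = \<iota> a * b"
    unfolding amul_l_def amul_r_def by (auto intro: theI')
qed

lemma amul_l_eqI: "\<iota> a' = b * \<iota> a \<Longrightarrow> amul_l \<iota> b a = a'"
  and amul_r_eqI: "\<iota> a' = \<iota> a * b \<Longrightarrow> amul_r \<iota> a b = a'"
  by (metis iota_amul_l iota_inj, metis iota_amul_r iota_inj)

lemma amul_bounded:
  obtains C where "\<And>a b. norm (amul_l \<iota> b a) \<le> norm b * norm a * C"
    and "\<And>a b. norm (amul_r \<iota> a b) \<le> norm a * norm b * C"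
proof -
  obtain C where "\<forall>a b. \<exists>a1 a2. \<iota> a1 = b * \<iota> a \<and> \<iota> a2 = \<iota> a * b \<and>
                    max (norm a1) (norm a2) \<le> C * norm a * norm b"
    using envelope by (auto simp: envelope_def)
  then have "norm (amul_l \<iota> b a) \<le> norm b * norm a * C \<and> norm (amul_r \<iota> a b) \<le> norm a * norm b * C"
    for a b by (metis amul_l_eqI amul_r_eqI max.bounded_iff mult.commute mult.left_commute)
  then show ?thesis using that by blast
qed

sublocale AL: bounded_bilinear "amul_l \<iota>"
proof
  show "\<exists>K. \<forall>b a. norm (amul_l \<iota> b a) \<le> norm b * norm a * K"
    using amul_bounded by metis
qed (auto intro!: amul_l_eqI simp: I.add I.scaleR distrib_left distrib_right)

sublocale AR: bounded_bilinear "amul_r \<iota>"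
proof
  show "\<exists>K. \<forall>a b. norm (amul_r \<iota> a b) \<le> norm a * norm b * K"
    using amul_bounded by metis
qed (auto intro!: amul_r_eqI simp: I.add I.scaleR distrib_left distrib_right)

lemma amul_l_iota [simp]: "amul_l \<iota> (\<iota> a) a' = a * a'"
  and amul_r_iota [simp]: "amul_r \<iota> a (\<iota> a') = a * a'"
  and amul_l_mult: "amul_l \<iota> b (a * a') = amul_l \<iota> b a * a'"
  and amul_r_mult: "amul_r \<iota> (a * a') b = a * amul_r \<iota> a' b"
  and amul_l_amul_l: "amul_l \<iota> b1 (amul_l \<iota> b2 a) = amul_l \<iota> (b1 * b2) a"
  and amul_r_amul_r: "amul_r \<iota> (amul_r \<iota> a b1) b2 = amul_r \<iota> a (b1 * b2)"
  and mult_amul_l: "a * amul_l \<iota> b a' = amul_r \<iota> a b * a'"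
  by (auto intro!: amul_l_eqI amul_r_eqI iota_inj simp: iota_mult mult.assoc)

lemma dc_lact_eq: "dc_lact \<iota> l b m = (L.prod_right b o\<^sub>L fst m, snd m o\<^sub>L AR.prod_left b)"
proof -
  have "(\<lambda>a. l b (blinfun_apply (fst m) a)) = blinfun_apply (L.prod_right b o\<^sub>L fst m)"
    and "(\<lambda>a. blinfun_apply (snd m) (amul_r \<iota> a b)) = blinfun_apply (snd m o\<^sub>L AR.prod_left b)"
    by (simp_all add: fun_eq_iff)
  then show ?thesis unfolding dc_lact_def by (simp only: blinfun_apply_inverse)
qed

lemma dc_ract_eq: "dc_ract \<iota> r m b = (fst m o\<^sub>L AL.prod_right b, R.prod_left b o\<^sub>L snd m)"
proof -
  have "(\<lambda>a. blinfun_apply (fst m) (amul_l \<iota> b a)) = blinfun_apply (fst m o\<^sub>L AL.prod_right b)"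
    and "(\<lambda>a. r (blinfun_apply (snd m) a) b) = blinfun_apply (R.prod_left b o\<^sub>L snd m)"
    by (simp_all add: fun_eq_iff)
  then show ?thesis unfolding dc_ract_def by (simp only: blinfun_apply_inverse)
qed

lemma dc_lact_apply [simp]:
  "blinfun_apply (fst (dc_lact \<iota> l b m)) a = l b (blinfun_apply (fst m) a)"
  "blinfun_apply (snd (dc_lact \<iota> l b m)) a = blinfun_apply (snd m) (amul_r \<iota> a b)"
  and dc_ract_apply [simp]:
  "blinfun_apply (fst (dc_ract \<iota> r m b)) a = blinfun_apply (fst m) (amul_l \<iota> b a)"
  "blinfun_apply (snd (dc_ract \<iota> r m b)) a = r (blinfun_apply (snd m) a) b"
  by (simp_all add: dc_lact_eq dc_ract_eq)

lemma iota_X_apply [simp]: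
  "blinfun_apply (fst (iota_X \<iota> l r x)) a = r x (\<iota> a)"
  "blinfun_apply (snd (iota_X \<iota> l r x)) a = l (\<iota> a) x"
  unfolding iota_X_def
  by (simp_all add: bounded_linear_Blinfun_apply bounded_linear_compose[OF R.bounded_linear_right I.bounded_linear]
      bounded_linear_compose[OF L.bounded_linear_left I.bounded_linear])

lemma bounded_bilinear_dc_lact: "bounded_bilinear (dc_lact \<iota> l)"
  unfolding dc_lact_eq
  by (intro bounded_bilinear_Pair
      bounded_bilinear.comp[OF bounded_bilinear_blinfun_compose L.bounded_linear_prod_right bounded_linear_fst]
      bounded_bilinear.flip[OF bounded_bilinear.comp[OF bounded_bilinear_blinfun_compose
          bounded_linear_snd AR.bounded_linear_prod_left]])

lemma bounded_bilinear_dc_ract: "bounded_bilinear (dc_ract \<iota> r)"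
  unfolding dc_ract_eq
  by (intro bounded_bilinear_Pair
      bounded_bilinear.comp[OF bounded_bilinear_blinfun_compose bounded_linear_fst AL.bounded_linear_prod_right]
      bounded_bilinear.flip[OF bounded_bilinear.comp[OF bounded_bilinear_blinfun_compose
          R.bounded_linear_prod_left bounded_linear_snd]])

lemma dc_lact_mult: "dc_lact \<iota> l (b1 * b2) m = dc_lact \<iota> l b1 (dc_lact \<iota> l b2 m)"
  and dc_ract_mult: "dc_ract \<iota> r m (b1 * b2) = dc_ract \<iota> r (dc_ract \<iota> r m b1) b2"
  and dc_ract_dc_lact: "dc_ract \<iota> r (dc_lact \<iota> l b1 m) b2 = dc_lact \<iota> l b1 (dc_ract \<iota> r m b2)"
  by (auto intro!: blinfun_eqI simp: prod_eq_iff l_mult r_mult amul_l_amul_l amul_r_amul_r)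

lemma mem_DC_iff: "m \<in> DC \<iota> l r \<longleftrightarrow>
      (\<forall>a a'. blinfun_apply (fst m) (a * a') = r (blinfun_apply (fst m) a) (\<iota> a')) \<and>
      (\<forall>a a'. blinfun_apply (snd m) (a * a') = l (\<iota> a) (blinfun_apply (snd m) a')) \<and>
      (\<forall>a a'. l (\<iota> a) (blinfun_apply (fst m) a') = r (blinfun_apply (snd m) a) (\<iota> a'))"
  by (cases m) (simp add: DC_def)

lemma
  assumes "m \<in> DC \<iota> l r"
  shows DC_fst_mult: "blinfun_apply (fst m) (a * a') = r (blinfun_apply (fst m) a) (\<iota> a')"
    and DC_snd_mult: "blinfun_apply (snd m) (a * a') = l (\<iota> a) (blinfun_apply (snd m) a')"
    and DC_compatible: "l (\<iota> a) (blinfun_apply (fst m) a') = r (blinfun_apply (snd m) a) (\<iota> a')"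
  using assms unfolding mem_DC_iff by blast+

lemma closed_DC: "closed (DC \<iota> l r)"
proof -
  have "DC \<iota> l r = {m.
      (\<forall>a a'. blinfun_apply (fst m) (a * a') = r (blinfun_apply (fst m) a) (\<iota> a')) \<and>
      (\<forall>a a'. blinfun_apply (snd m) (a * a') = l (\<iota> a) (blinfun_apply (snd m) a')) \<and>
      (\<forall>a a'. l (\<iota> a) (blinfun_apply (fst m) a') = r (blinfun_apply (snd m) a) (\<iota> a'))}"
    using mem_DC_iff by blast
  also have "closed \<dots>"
    by (intro closed_Collect_conj closed_Collect_all closed_Collect_eq continuous_intros
        L.continuous_on R.continuous_on)
  finally show ?thesis .
qed

lemma subspace_DC: "subspace (DC \<iota> l r)"
  unfolding subspace_def
  by (auto simp: mem_DC_iff L.add_right R.add_left L.scaleR_right R.scaleR_left L.zero_right R.zero_left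
      blinfun.add_left blinfun.scaleR_left)

lemma dc_lact_in_DC:
  assumes m: "m \<in> DC \<iota> l r"
  shows "dc_lact \<iota> l b m \<in> DC \<iota> l r"
proof -
  have "l (\<iota> a) (l b (blinfun_apply (fst m) a')) = r (blinfun_apply (snd m) (amul_r \<iota> a b)) (\<iota> a')" for a a'
    using DC_compatible[OF m, of "amul_r \<iota> a b" a'] by (simp add: l_mult)
  then show ?thesis
    by (simp add: mem_DC_iff DC_fst_mult[OF m] DC_snd_mult[OF m] amul_r_mult r_l_comm)
qed

lemma dc_ract_in_DC:
  assumes m: "m \<in> DC \<iota> l r"
  shows "dc_ract \<iota> r m b \<in> DC \<iota> l r"
proof -
  have "l (\<iota> a) (blinfun_apply (fst m) (amul_l \<iota> b a')) = r (r (blinfun_apply (snd m) a) b) (\<iota> a')" for a a'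
    using DC_compatible[OF m, of a "amul_l \<iota> b a'"] by (simp add: r_mult)
  then show ?thesis
    by (simp add: mem_DC_iff DC_fst_mult[OF m] DC_snd_mult[OF m] amul_l_mult r_l_comm)
qed

lemma bimodule_on_DC: "bimodule_on (DC \<iota> l r) (dc_lact \<iota> l) (dc_ract \<iota> r)"
  by (intro bimodule_onI subspace_DC dc_lact_in_DC dc_ract_in_DC bounded_bilinear_dc_lact
      bounded_bilinear_dc_ract dc_lact_mult dc_ract_mult dc_ract_dc_lact)

lemma derivation_DC_diff:
  assumes m: "(S, T) \<in> DC \<iota> l r"
  shows "derivation (\<lambda>a x. l (\<iota> a) x) (\<lambda>x a. r x (\<iota> a)) (\<lambda>a. blinfun_apply S a - blinfun_apply T a)"
  unfolding derivation_def
  using DC_fst_mult[OF m] DC_snd_mult[OF m] DC_compatible[OF m]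
  by (auto intro!: bounded_linear_sub blinfun.bounded_linear_right simp: L.diff_right R.diff_left algebra_simps)

lemma DC_eqI_iota_actions:
  assumes dense: "closure (span {a * a' | a a' :: 'a. True}) = UNIV"
    and ract: "\<And>a. dc_ract \<iota> r m (\<iota> a) = dc_ract \<iota> r m' (\<iota> a)"
    and lact: "\<And>a. dc_lact \<iota> l (\<iota> a) m = dc_lact \<iota> l (\<iota> a) m'"
  shows "m = m'"
proof -
  have "blinfun_apply (fst m) = blinfun_apply (fst m')"
  proof (rule bounded_linear_eq_if_eq_on_products[OF blinfun.bounded_linear_right
        blinfun.bounded_linear_right dense])
    show "blinfun_apply (fst m) (a * a') = blinfun_apply (fst m') (a * a')" for a a'
      using arg_cong[OF ract[of a], of "\<lambda>p. blinfun_apply (fst p) a'"] by simp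
  qed
  moreover have "blinfun_apply (snd m) = blinfun_apply (snd m')"
  proof (rule bounded_linear_eq_if_eq_on_products[OF blinfun.bounded_linear_right
        blinfun.bounded_linear_right dense])
    show "blinfun_apply (snd m) (a * a') = blinfun_apply (snd m') (a * a')" for a a'
      using arg_cong[OF lact[of a'], of "\<lambda>p. blinfun_apply (snd p) a"] by simp
  qed
  ultimately show ?thesis by (simp add: prod_eq_iff blinfun_apply_inject)
qed

end

locale envelope_derivation = envelope_bimodule \<iota> l r
  for \<iota> :: "'a::real_normed_algebra \<Rightarrow> 'b::real_normed_algebra"
    and l :: "'b \<Rightarrow> 'x::banach \<Rightarrow> 'x" and r :: "'x \<Rightarrow> 'b \<Rightarrow> 'x" +
  fixes D :: "'a \<Rightarrow> 'x"
  assumes derivation: "derivation (\<lambda>a x. l (\<iota> a) x) (\<lambda>x a. r x (\<iota> a)) D"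
begin

sublocale D: bounded_linear D
  using derivation by (simp add: derivation_def)

lemma D_mult: "D (a * a') = l (\<iota> a) (D a') + r (D a) (\<iota> a')"
  using derivation by (simp add: derivation_def)

definition D_ext :: "'b \<Rightarrow> ('a \<Rightarrow>\<^sub>L 'x) \<times> ('a \<Rightarrow>\<^sub>L 'x)" where
  "D_ext b = ((Blinfun D o\<^sub>L AL.prod_right b) - (L.prod_right b o\<^sub>L Blinfun D),
              (Blinfun D o\<^sub>L AR.prod_left b) - (R.prod_left b o\<^sub>L Blinfun D))"

lemma D_ext_apply [simp]:
  "blinfun_apply (fst (D_ext b)) a = D (amul_l \<iota> b a) - l b (D a)"
  "blinfun_apply (snd (D_ext b)) a = D (amul_r \<iota> a b) - r (D a) b"
  by (simp_all add: D_ext_def blinfun.diff_left bounded_linear_Blinfun_apply[OF D.bounded_linear])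

lemma bounded_linear_D_ext: "bounded_linear D_ext"
  unfolding D_ext_def
  by (intro bounded_linear_Pair bounded_linear_sub
      bounded_linear_compose[OF bounded_bilinear.bounded_linear_right[OF bounded_bilinear_blinfun_compose]
        AL.bounded_linear_prod_right]
      bounded_linear_compose[OF bounded_bilinear.bounded_linear_right[OF bounded_bilinear_blinfun_compose]
        AR.bounded_linear_prod_left]
      bounded_linear_compose[OF bounded_bilinear.bounded_linear_left[OF bounded_bilinear_blinfun_compose]
        L.bounded_linear_prod_right]
      bounded_linear_compose[OF bounded_bilinear.bounded_linear_left[OF bounded_bilinear_blinfun_compose]
        R.bounded_linear_prod_left])

lemma D_ext_iota: "D_ext (\<iota> a) = iota_X \<iota> l r (D a)"
  by (auto intro!: blinfun_eqI simp: prod_eq_iff D_mult)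

lemma D_ext_in_DC: "D_ext b \<in> DC \<iota> l r"
proof -
  have "r (r (D a) b) (\<iota> a') + l (\<iota> a) (D (amul_l \<iota> b a')) =
        l (\<iota> a) (l b (D a')) + r (D (amul_r \<iota> a b)) (\<iota> a')" for a a'
  proof -
    have "D (a * amul_l \<iota> b a') = D (amul_r \<iota> a b * a')" by (simp add: mult_amul_l)
    then show ?thesis by (simp add: D_mult l_mult r_mult algebra_simps)
  qed
  then show ?thesis
    by (simp add: mem_DC_iff amul_l_mult amul_r_mult D_mult l_mult r_mult r_l_comm L.diff_right R.diff_left
        L.add_right R.add_left algebra_simps)
qed

lemma derivation_D_ext: "derivation (dc_lact \<iota> l) (dc_ract \<iota> r) D_ext"
  unfolding derivation_def
  by (auto intro!: bounded_linear_D_ext blinfun_eqI simp: prod_eq_iff blinfun.add_left amul_l_amul_l amul_r_amul_r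
      l_mult r_mult L.diff_right R.diff_left)

lemma D_ext_unique:
  assumes dense: "closure (span {a * a' | a a' :: 'a. True}) = UNIV"
    and D': "derivation (dc_lact \<iota> l) (dc_ract \<iota> r) D'"
    and D'_iota: "\<And>a. D' (\<iota> a) = iota_X \<iota> l r (D a)"
  shows "D' = D_ext"
proof
  fix b
  have on_iota: "D' (\<iota> a) = D_ext (\<iota> a)" for a
    by (simp add: D'_iota D_ext_iota)
  have D'_mult: "D' (x * y) = dc_lact \<iota> l x (D' y) + dc_ract \<iota> r (D' x) y"
    and D_ext_mult: "D_ext (x * y) = dc_lact \<iota> l x (D_ext y) + dc_ract \<iota> r (D_ext x) y" for x y
    using D' derivation_D_ext by (simp_all add: derivation_def)
  show "D' b = D_ext b"
  proof (rule DC_eqI_iota_actions[OF dense])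
    fix a
    have "D' (b * \<iota> a) = D_ext (b * \<iota> a)"
      using on_iota by (metis iota_amul_l)
    then show "dc_ract \<iota> r (D' b) (\<iota> a) = dc_ract \<iota> r (D_ext b) (\<iota> a)"
      unfolding D'_mult D_ext_mult on_iota by simp
    have "D' (\<iota> a * b) = D_ext (\<iota> a * b)"
      using on_iota by (metis iota_amul_r)
    then show "dc_lact \<iota> l (\<iota> a) (D' b) = dc_lact \<iota> l (\<iota> a) (D_ext b)"
      unfolding D'_mult D_ext_mult on_iota by simp
  qed
qed

lemma D_ext_inner_imp_D_eq:
  assumes dense: "closure (span {a * a' | a a' :: 'a. True}) = UNIV"
    and m: "m \<in> DC \<iota> l r"
    and inner: "\<And>b. D_ext b = dc_lact \<iota> l b m - dc_ract \<iota> r m b"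
  shows "D a = blinfun_apply (snd m) a - blinfun_apply (fst m) a"
proof -
  let ?S = "blinfun_apply (fst m)" and ?T = "blinfun_apply (snd m)"
  have fst_inner: "r (D a) (\<iota> a') = l (\<iota> a) (?S a') - ?S (a * a')" for a a'
    using arg_cong[OF inner[of "\<iota> a"], of "\<lambda>p. blinfun_apply (fst p) a'"]
    by (simp add: D_ext_iota blinfun.diff_left)
  have snd_inner: "l (\<iota> a) (D a') = ?T (a * a') - r (?T a) (\<iota> a')" for a a'
    using arg_cong[OF inner[of "\<iota> a'"], of "\<lambda>p. blinfun_apply (snd p) a"]
    by (simp add: D_ext_iota blinfun.diff_left)
  define y where "y a = D a + ?S a - ?T a" for a
  have "y (a * a') = l (\<iota> a) (y a')" for a a'
    using fst_inner[of a a'] unfolding y_def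
    by (simp add: D_mult DC_fst_mult[OF m] DC_snd_mult[OF m] L.add_right L.diff_right algebra_simps)
  moreover have "l (\<iota> a) (y a') = 0" for a a'
    using snd_inner[of a a'] DC_compatible[OF m, of a a'] unfolding y_def
    by (simp add: DC_snd_mult[OF m] L.add_right L.diff_right)
  ultimately have "y = (\<lambda>_. 0)"
    unfolding y_def
    by (intro bounded_linear_eq_if_eq_on_products[OF _ bounded_linear_zero dense])
      (auto intro!: bounded_linear_sub bounded_linear_add D.bounded_linear blinfun.bounded_linear_right)
  then show ?thesis
    using fun_cong[of y _ a] unfolding y_def by (simp add: algebra_simps)
qed

lemma D_ext_inner_imp_DC_diff:
  assumes dense: "closure (span {a * a' | a a' :: 'a. True}) = UNIV"
    and m: "m \<in> DC \<iota> l r"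
    and inner: "\<And>b. D_ext b = dc_lact \<iota> l b m - dc_ract \<iota> r m b"
  shows "\<exists>(S, T)\<in>DC \<iota> l r. \<forall>a. D a = blinfun_apply S a - blinfun_apply T a"
proof
  show "- m \<in> DC \<iota> l r" by (rule subspace_neg[OF subspace_DC m])
  show "case - m of (S, T) \<Rightarrow> \<forall>a. D a = blinfun_apply S a - blinfun_apply T a"
    using D_ext_inner_imp_D_eq[OF assms] by (simp add: case_prod_beta blinfun.minus_left)
qed

end

theorem theorem1p3:
  fixes \<iota> :: "'a::{real_normed_algebra, banach} \<Rightarrow> 'b::{real_normed_algebra, banach}"
    and l :: "'b \<Rightarrow> 'x::banach \<Rightarrow> 'x" and r :: "'x \<Rightarrow> 'b \<Rightarrow> 'x"
    and D :: "'a \<Rightarrow> 'x"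
  assumes env: "envelope \<iota>"
    and X: "banach_bimodule l r"
    and D: "derivation (\<lambda>a x. l (\<iota> a) x) (\<lambda>x a. r x (\<iota> a)) D"
  shows
    "banach_bimodule (\<lambda>a x. l (\<iota> a) x) (\<lambda>x a. r x (\<iota> a))
     \<and> bimodule_on (DC \<iota> l r) (dc_lact \<iota> l) (dc_ract \<iota> r)
     \<and> closed (DC \<iota> l r)
     \<and> (\<exists>Dt :: 'b \<Rightarrow> ('a \<Rightarrow>\<^sub>L 'x) \<times> ('a \<Rightarrow>\<^sub>L 'x).
          range Dt \<subseteq> DC \<iota> l r
        \<and> derivation (dc_lact \<iota> l) (dc_ract \<iota> r) Dt
        \<and> (\<forall>a. Dt (\<iota> a) = iota_X \<iota> l r (D a))
        \<and> (closure (span {a * a' | a a' :: 'a. True}) = (UNIV :: 'a set) \<longrightarrow>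
             (\<forall>Dt' :: 'b \<Rightarrow> ('a \<Rightarrow>\<^sub>L 'x) \<times> ('a \<Rightarrow>\<^sub>L 'x).
                 range Dt' \<subseteq> DC \<iota> l r \<and> derivation (dc_lact \<iota> l) (dc_ract \<iota> r) Dt'
                 \<and> (\<forall>a. Dt' (\<iota> a) = iota_X \<iota> l r (D a)) \<longrightarrow> Dt' = Dt)
           \<and> ((\<exists>m\<in>DC \<iota> l r. \<forall>b. Dt b = dc_lact \<iota> l b m - dc_ract \<iota> r m b) \<longrightarrow>
               (\<exists>(S, T)\<in>DC \<iota> l r. \<forall>a. D a = blinfun_apply S a - blinfun_apply T a))))
     \<and> (\<forall>(S, T)\<in>DC \<iota> l r. derivation (\<lambda>a x. l (\<iota> a) x) (\<lambda>x a. r x (\<iota> a))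
                               (\<lambda>a. blinfun_apply S a - blinfun_apply T a))"
proof -
  interpret envelope_derivation \<iota> l r D
    using env X D by unfold_locales
  show ?thesis
    using banach_bimodule_restrict[OF X I.bounded_linear iota_mult] bimodule_on_DC closed_DC
      D_ext_in_DC derivation_D_ext D_ext_iota D_ext_unique D_ext_inner_imp_DC_diff derivation_DC_diff
    by (intro conjI exI[of _ D_ext]) (blast | fastforce)+
qed

end
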